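(* Let $D$ be an Eulerian digraph (finite, without loops, parallel arcs or digons) which admits a simple dicycle intersection graph, i.e. $D$ has a cycle decomposition $\mathcal{F}(D)$ in which any two distinct dicycles share at most one vertex. Then every vertex of $D$ is a Seymour vertex: $|N^{+2}(v)|\geq |N^{+}(v)|$ for all $v\in V(D)$, i.e. $SV(D)=V(D)$.
   Context: All digraphs are finite, with no loops, no parallel arcs and no digons (a digon is a pair of arcs $u\to w$, $w\to u$); in particular every dicycle has length at least $3$. For a vertex $v$, $N^{+}(v)$ is the set of out-neighbours of $v$, and $N^{+2}(v)$ is the second out-neighbourhood: the set of vertices $w\notin N^{+}(v)\cup\{v\}$ such that $u\to w$ is an arc for some $u\in N^{+}(v)$ (vertices at directed distance exactly $2$ from $v$). A vertex $v$ with $|N^{+2}(v)|\ge |N^{+}(v)|$ is a Seymour vertex, and $SV(D)$ denotes the set of Seymour vertices of $D$. An Eulerian digraph is a (weakly) connected digraph having a closed directed trail using every arc exactly once; equivalently a connected digraph with $d^{+}(v)=d^{-}(v)$ for all $v$. A cycle decomposition $\mathcal{F}(D)$ is a set of dicycles of $D$ whose arc sets partition $A(D)$. The dicycle intersection graph $CI(D)$ associated with $\mathcal{F}(D)$ is the multigraph with vertex set $\mathcal{F}(D)$ having, for each pair of distinct dicycles $C,C'\in\mathcal{F}(D)$ and each vertex of $D$ lying on both $C$ and $C'$, one edge between $C$ and $C'$. $D$ admits a simple dicycle intersection graph if for some cycle decomposition this multigraph has no parallel edges. *)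

theory Defs
  imports Main
begin

text \<open>A digraph is given by a vertex set V and an arc set A (a set of ordered
pairs, so parallel arcs are impossible).\<close>

definition digraph :: "'a set \<Rightarrow> ('a \<times> 'a) set \<Rightarrow> bool" where
  "digraph V A \<longleftrightarrow> finite V \<and> A \<subseteq> V \<times> V
     \<and> (\<forall>v. (v, v) \<notin> A)
     \<and> (\<forall>u w. (u, w) \<in> A \<longrightarrow> (w, u) \<notin> A)"

definition out_nbrs :: "('a \<times> 'a) set \<Rightarrow> 'a \<Rightarrow> 'a set" where
  "out_nbrs A v = {w. (v, w) \<in> A}"

definition second_out_nbrs :: "('a \<times> 'a) set \<Rightarrow> 'a \<Rightarrow> 'a set" where
  "second_out_nbrs A v =
     {w. w \<notin> out_nbrs A v \<and> w \<noteq> v \<and> (\<exists>u \<in> out_nbrs A v. (u, w) \<in> A)}"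

definition seymour_vertex :: "('a \<times> 'a) set \<Rightarrow> 'a \<Rightarrow> bool" where
  "seymour_vertex A v \<longleftrightarrow> card (second_out_nbrs A v) \<ge> card (out_nbrs A v)"

definition weakly_connected :: "'a set \<Rightarrow> ('a \<times> 'a) set \<Rightarrow> bool" where
  "weakly_connected V A \<longleftrightarrow> (\<forall>u \<in> V. \<forall>v \<in> V. (u, v) \<in> (A \<union> A\<inverse>)\<^sup>*)"

definition closed_euler_trail :: "('a \<times> 'a) set \<Rightarrow> ('a \<times> 'a) list \<Rightarrow> bool" where
  "closed_euler_trail A es \<longleftrightarrow> distinct es \<and> set es = A
     \<and> (\<forall>i < length es. snd (es ! i) = fst (es ! ((i + 1) mod length es)))"

definition eulerian :: "'a set \<Rightarrow> ('a \<times> 'a) set \<Rightarrow> bool" where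
  "eulerian V A \<longleftrightarrow> digraph V A \<and> weakly_connected V A \<and> (\<exists>es. closed_euler_trail A es)"

definition cycle_arcs :: "'a list \<Rightarrow> ('a \<times> 'a) set" where
  "cycle_arcs cs = {(cs ! i, cs ! ((i + 1) mod length cs)) | i. i < length cs}"

definition dicycle :: "('a \<times> 'a) set \<Rightarrow> ('a \<times> 'a) set \<Rightarrow> bool" where
  "dicycle A C \<longleftrightarrow> (\<exists>cs. distinct cs \<and> length cs \<ge> 3 \<and> C = cycle_arcs cs \<and> C \<subseteq> A)"

definition cycle_verts :: "('a \<times> 'a) set \<Rightarrow> 'a set" where
  "cycle_verts C = fst ` C"

definition cycle_decomposition :: "('a \<times> 'a) set \<Rightarrow> ('a \<times> 'a) set set \<Rightarrow> bool" where
  "cycle_decomposition A F \<longleftrightarrow> (\<forall>C \<in> F. dicycle A C) \<and> \<Union>F = A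
     \<and> (\<forall>C \<in> F. \<forall>C' \<in> F. C \<noteq> C' \<longrightarrow> C \<inter> C' = {})"

text \<open>The dicycle intersection graph has one edge between C and C' per common
vertex; it is simple iff distinct dicycles share at most one vertex.\<close>
definition simple_intersection :: "('a \<times> 'a) set set \<Rightarrow> bool" where
  "simple_intersection F \<longleftrightarrow>
     (\<forall>C \<in> F. \<forall>C' \<in> F. C \<noteq> C' \<longrightarrow> card (cycle_verts C \<inter> cycle_verts C') \<le> 1)"

definition admits_simple_CI :: "('a \<times> 'a) set \<Rightarrow> bool" where
  "admits_simple_CI A \<longleftrightarrow> (\<exists>F. cycle_decomposition A F \<and> simple_intersection F)"

end

theory Submission
  imports Defs
begin

text \<open>For an out-neighbour w of v, follow the dicycle of the decomposition through
the arc (v,w) one step further to a vertex x. Since x \<noteq> v, and a chord (v,x)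
would lie on a second dicycle meeting the first in v and x, x is a second
out-neighbour of v. Two out-neighbours w, w' with the same x would likewise give two
dicycles sharing v and x, or two successors of v on one dicycle. So w \<mapsto> x
injects the out-neighbourhood of v into its second out-neighbourhood.\<close>

lemma cycle_arcs_memE:
  assumes "(a, b) \<in> cycle_arcs cs"
  obtains i where "i < length cs" "a = cs ! i" "b = cs ! ((i + 1) mod length cs)"
  using assms unfolding cycle_arcs_def by blast

lemma cycle_arcs_nth:
  "i < length cs \<Longrightarrow> (cs ! i, cs ! ((i + 1) mod length cs)) \<in> cycle_arcs cs"
  unfolding cycle_arcs_def by blast

lemma cycle_verts_cycle_arcs: "cycle_verts (cycle_arcs cs) = set cs"
proof -
  have "fst ` cycle_arcs cs = (\<lambda>i. cs ! i) ` {..<length cs}"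
    unfolding cycle_arcs_def by force
  also have "\<dots> = set cs" by (auto simp: in_set_conv_nth)
  finally show ?thesis unfolding cycle_verts_def .
qed

lemma cycle_arcs_snd_in_set: "(a, b) \<in> cycle_arcs cs \<Longrightarrow> b \<in> set cs"
  by (erule cycle_arcs_memE) (metis length_pos_if_in_set mod_less_divisor nth_mem)

lemma cycle_arcs_succ_unique:
  assumes "distinct cs" "(a, b) \<in> cycle_arcs cs" "(a, c) \<in> cycle_arcs cs"
  shows "b = c"
  using assms(2,3) by (elim cycle_arcs_memE) (metis assms(1) nth_eq_iff_index_eq)

lemma cycle_arcs_irrefl:
  assumes "distinct cs" "length cs \<ge> 2"
  shows "(a, a) \<notin> cycle_arcs cs"
proof
  assume "(a, a) \<in> cycle_arcs cs"
  then obtain i where i: "i < length cs" "cs ! i = cs ! ((i + 1) mod length cs)"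
    by (elim cycle_arcs_memE) simp
  moreover have "(i + 1) mod length cs < length cs" using assms(2) by (intro mod_less_divisor) linarith
  ultimately have "i = (i + 1) mod length cs"
    using assms(1) by (simp add: nth_eq_iff_index_eq)
  thus False using i(1) assms(2)
    by (cases "i + 1 < length cs") (auto simp: le_mod_geq)
qed

lemma cycle_arcs_next_not_prev:
  assumes "distinct cs" "length cs \<ge> 3" "(v, w) \<in> cycle_arcs cs"
  shows "\<exists>x. (w, x) \<in> cycle_arcs cs \<and> x \<noteq> v"
proof -
  let ?n = "length cs"
  obtain i where i: "i < ?n" "v = cs ! i" "w = cs ! ((i + 1) mod ?n)"
    using assms(3) by (rule cycle_arcs_memE)
  let ?k = "(i + 1) mod ?n"
  have "?k < ?n" using assms(2) by (intro mod_less_divisor) linarith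
  from cycle_arcs_nth[OF this] have next_arc: "(w, cs ! ((?k + 1) mod ?n)) \<in> cycle_arcs cs"
    using i(3) by simp
  have "(?k + 1) mod ?n = (i + 2) mod ?n" by (simp add: mod_Suc_eq)
  moreover have "(i + 2) mod ?n \<noteq> i"
    using i(1) assms(2) by (cases "i + 2 < ?n") (auto simp: le_mod_geq)
  moreover have "(i + 2) mod ?n < ?n" using assms(2) by (intro mod_less_divisor) linarith
  ultimately have "cs ! ((?k + 1) mod ?n) \<noteq> v"
    using i assms(1) by (simp add: nth_eq_iff_index_eq)
  thus ?thesis using next_arc by blast
qed

lemma dicycle_arc_verts:
  assumes "dicycle A C" "(a, b) \<in> C"
  shows "a \<in> cycle_verts C" "b \<in> cycle_verts C"
proof -
  show "a \<in> cycle_verts C" using assms(2) unfolding cycle_verts_def by force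
  obtain cs where "C = cycle_arcs cs" using assms(1) unfolding dicycle_def by blast
  thus "b \<in> cycle_verts C"
    using assms(2) cycle_arcs_snd_in_set[of a b cs] by (simp add: cycle_verts_cycle_arcs)
qed

lemma finite_cycle_verts:
  assumes "dicycle A C" shows "finite (cycle_verts C)"
proof -
  obtain cs where "C = cycle_arcs cs" using assms unfolding dicycle_def by blast
  thus ?thesis by (simp add: cycle_verts_cycle_arcs)
qed

lemma dicycle_succ_unique:
  assumes "dicycle A C" "(a, b) \<in> C" "(a, c) \<in> C" shows "b = c"
proof -
  obtain cs where "distinct cs" "C = cycle_arcs cs" using assms(1) unfolding dicycle_def by blast
  thus ?thesis using assms(2,3) cycle_arcs_succ_unique by metis
qed

lemma dicycle_irrefl:
  assumes "dicycle A C" shows "(a, a) \<notin> C"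
proof -
  obtain cs where "distinct cs" "length cs \<ge> 3" "C = cycle_arcs cs"
    using assms unfolding dicycle_def by blast
  thus ?thesis using cycle_arcs_irrefl[of cs a] by simp
qed

lemma dicycle_next_not_prev:
  assumes "dicycle A C" "(v, w) \<in> C" shows "\<exists>x. (w, x) \<in> C \<and> x \<noteq> v"
proof -
  obtain cs where "distinct cs" "length cs \<ge> 3" "C = cycle_arcs cs"
    using assms(1) unfolding dicycle_def by blast
  thus ?thesis using assms(2) cycle_arcs_next_not_prev[of cs v w] by simp
qed

lemma cycle_decomposition_dicycle:
  "cycle_decomposition A F \<Longrightarrow> C \<in> F \<Longrightarrow> dicycle A C"
  unfolding cycle_decomposition_def by blast

lemma cycle_decomposition_covers:
  "cycle_decomposition A F \<Longrightarrow> e \<in> A \<Longrightarrow> \<exists>C \<in> F. e \<in> C"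
  unfolding cycle_decomposition_def by blast

lemma simple_intersection_common_verts_eq:
  assumes "cycle_decomposition A F" "simple_intersection F"
    and "C \<in> F" "C' \<in> F" "C \<noteq> C'"
    and "a \<in> cycle_verts C \<inter> cycle_verts C'" "b \<in> cycle_verts C \<inter> cycle_verts C'"
  shows "a = b"
proof (rule ccontr)
  assume "a \<noteq> b"
  have "finite (cycle_verts C \<inter> cycle_verts C')"
    using assms(1,3) cycle_decomposition_dicycle finite_cycle_verts by blast
  hence "card {a, b} \<le> card (cycle_verts C \<inter> cycle_verts C')"
    using assms(6,7) by (intro card_mono) auto
  moreover have "card (cycle_verts C \<inter> cycle_verts C') \<le> 1"
    using assms(2-5) unfolding simple_intersection_def by blast
  ultimately show False using \<open>a \<noteq> b\<close> by simp
qed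

lemma simple_decomposition_two_step_not_arc:
  assumes decomp: "cycle_decomposition A F" and simple: "simple_intersection F"
    and C: "C \<in> F" "(v, w) \<in> C" "(w, x) \<in> C" and "x \<noteq> v"
  shows "(v, x) \<notin> A"
proof
  assume "(v, x) \<in> A"
  then obtain C' where C': "C' \<in> F" "(v, x) \<in> C'"
    using decomp cycle_decomposition_covers by blast
  have "dicycle A C" "dicycle A C'" using C(1) C'(1) decomp cycle_decomposition_dicycle by auto
  show False
  proof (cases "C' = C")
    case True
    hence "w = x" using dicycle_succ_unique[OF \<open>dicycle A C\<close> C(2)] C'(2) by blast
    thus False using dicycle_irrefl[OF \<open>dicycle A C\<close>] C(3) by blast
  next
    case False
    have "v \<in> cycle_verts C \<inter> cycle_verts C'" "x \<in> cycle_verts C \<inter> cycle_verts C'"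
      using dicycle_arc_verts[OF \<open>dicycle A C\<close> C(2)] dicycle_arc_verts[OF \<open>dicycle A C\<close> C(3)]
        dicycle_arc_verts[OF \<open>dicycle A C'\<close> C'(2)] by blast+
    from simple_intersection_common_verts_eq[OF decomp simple C(1) C'(1) False[symmetric] this]
    show False using \<open>x \<noteq> v\<close> by simp
  qed
qed

lemma simple_decomposition_two_step_unique:
  assumes decomp: "cycle_decomposition A F" and simple: "simple_intersection F"
    and C1: "C1 \<in> F" "(v, w1) \<in> C1" "(w1, x) \<in> C1"
    and C2: "C2 \<in> F" "(v, w2) \<in> C2" "(w2, x) \<in> C2"
    and "x \<noteq> v"
  shows "w1 = w2"
proof -
  have dicycles: "dicycle A C1" "dicycle A C2"
    using C1(1) C2(1) decomp cycle_decomposition_dicycle by auto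
  show ?thesis
  proof (cases "C1 = C2")
    case True
    with dicycle_succ_unique[OF dicycles(1) C1(2)] C2(2) show ?thesis by simp
  next
    case False
    have "v \<in> cycle_verts C1 \<inter> cycle_verts C2" "x \<in> cycle_verts C1 \<inter> cycle_verts C2"
      using dicycle_arc_verts[OF dicycles(1) C1(2)] dicycle_arc_verts[OF dicycles(1) C1(3)]
        dicycle_arc_verts[OF dicycles(2) C2(2)] dicycle_arc_verts[OF dicycles(2) C2(3)]
      by simp_all
    from simple_intersection_common_verts_eq[OF decomp simple C1(1) C2(1) False this]
    show ?thesis using \<open>x \<noteq> v\<close> by simp
  qed
qed

lemma seymour_vertex_if_simple_decomposition:
  assumes "finite A" and decomp: "cycle_decomposition A F" and simple: "simple_intersection F"
  shows "seymour_vertex A v"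
proof -
  have "\<exists>x. \<exists>C \<in> F. (v, w) \<in> C \<and> (w, x) \<in> C \<and> x \<noteq> v" if "w \<in> out_nbrs A v" for w
  proof -
    have "(v, w) \<in> A" using that unfolding out_nbrs_def by simp
    then obtain C where C: "C \<in> F" "(v, w) \<in> C"
      using cycle_decomposition_covers[OF decomp] by blast
    with dicycle_next_not_prev[OF cycle_decomposition_dicycle[OF decomp C(1)] C(2)]
    show ?thesis by blast
  qed
  then obtain f where f: "\<And>w. w \<in> out_nbrs A v \<Longrightarrow>
      \<exists>C \<in> F. (v, w) \<in> C \<and> (w, f w) \<in> C \<and> f w \<noteq> v"
    by metis
  have "inj_on f (out_nbrs A v)"
  proof (rule inj_onI)
    fix w1 w2 assume "w1 \<in> out_nbrs A v" "w2 \<in> out_nbrs A v" "f w1 = f w2"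
    with f obtain C1 C2 where "C1 \<in> F" "(v, w1) \<in> C1" "(w1, f w1) \<in> C1"
      and "C2 \<in> F" "(v, w2) \<in> C2" "(w2, f w1) \<in> C2" "f w1 \<noteq> v"
      by metis
    thus "w1 = w2" by (rule simple_decomposition_two_step_unique[OF decomp simple])
  qed
  moreover have "f ` out_nbrs A v \<subseteq> second_out_nbrs A v"
  proof
    fix x assume "x \<in> f ` out_nbrs A v"
    then obtain w C where C: "w \<in> out_nbrs A v" "C \<in> F" "(v, w) \<in> C" "(w, x) \<in> C" "x \<noteq> v"
      using f by blast
    have "(w, x) \<in> A" using C(2,4) decomp unfolding cycle_decomposition_def by blast
    moreover have "(v, x) \<notin> A"
      using simple_decomposition_two_step_not_arc[OF decomp simple C(2-5)] .
    ultimately show "x \<in> second_out_nbrs A v"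
      using C(1,5) unfolding second_out_nbrs_def out_nbrs_def by blast
  qed
  moreover have "finite (second_out_nbrs A v)"
  proof (rule finite_subset)
    show "second_out_nbrs A v \<subseteq> snd ` A"
      unfolding second_out_nbrs_def out_nbrs_def by force
  qed (use \<open>finite A\<close> in simp)
  ultimately show ?thesis
    unfolding seymour_vertex_def by (rule card_inj_on_le)
qed

theorem theorem2p1:
  fixes V :: "'a set" and A :: "('a \<times> 'a) set"
  assumes "eulerian V A"
    and "admits_simple_CI A"
  shows "\<forall>v \<in> V. seymour_vertex A v"
proof
  fix v
  have "finite V" "A \<subseteq> V \<times> V"
    using assms(1) unfolding eulerian_def digraph_def by simp_all
  hence "finite A" by (meson finite_SigmaI finite_subset)
  moreover obtain F where "cycle_decomposition A F" "simple_intersection F"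
    using assms(2) unfolding admits_simple_CI_def by blast
  ultimately show "seymour_vertex A v" by (rule seymour_vertex_if_simple_decomposition)
qed

end
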